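(* A family $\mathcal F$ of safety constraints is a family with a universal detector if and only if there exists $C\subseteq\Omega$ such that (1) for every $P\in C$ and every $n\in N$, either $n\in P$ or $n^{-1}\cdot P\in C$; and (2) for every safety constraint $S$, $S\in\mathcal F$ if and only if $S=C_\omega(P)$ for some $P\in C$.
   Context: Fix a finite nonempty set $N$; $N^+$ the nonempty finite words, $N^{\mathbb N}$ the streams; $s[0{:}m]$ prefix of length $m$, $s[m{:}]$ suffix; $n^{-1}\cdot A=\{u:nu\in A\}$; a set of words is prefix-free if no proper prefix (including the empty word) of a member is a member. A safety constraint is a set $S\subseteq N^{\mathbb N}$ such that any $s$ with "for every $m$ there is $s'\in S$ with $s'[0{:}m]=s[0{:}m]$" belongs to $S$. Let $\mathbf 1=\{\Downarrow\}$. A detector is a set $|a|$ with $a:|a|\to(\mathbf 1+|a|)^N$. The final detector $\omega$ has carrier $\Omega$ = the set of prefix-free subsets of $N^+$, with $\omega(P)(n)=\Downarrow$ if $n\in P$, else $n^{-1}\cdot P$. For $s\in N^{\mathbb N}$, $\mathrm{Join}([s],a)$ maps $(t,y)\in\{s[k{:}]\}\times|a|$ to $\Downarrow$ if $a(y)(t(0))=\Downarrow$, else $(t[1{:}],a(y)(t(0)))$; iterates $g^{(1)}=g$, $g^{(k+1)}(z)=\Downarrow$ if $g^{(k)}(z)=\Downarrow$, else $g(g^{(k)}(z))$. $C_a(x)=\{s:\mathrm{Join}([s],a)^{(k)}(s,x)\ne\Downarrow\ \forall k\ge1\}$. A family $\mathcal F$ of safety constraints is a family with a universal detector if $\mathcal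 F=\{C_a(x):x\in|a|\}$ for some detector $a$. *)

theory Defs
  imports Main
begin

text \<open>The alphabet N is a finite (hence nonempty) type 'n. Streams are functions nat \<Rightarrow> 'n;
nonempty finite words are nonempty lists. The output \<Down> is None, a next state y is Some y.\<close>

type_synonym 'n stream = "nat \<Rightarrow> 'n"

definition safety :: "('n stream) set \<Rightarrow> bool" where
  "safety S \<longleftrightarrow> (\<forall>s. (\<forall>m. \<exists>s'\<in>S. \<forall>i<m. s' i = s i) \<longrightarrow> s \<in> S)"

definition lquot :: "'n \<Rightarrow> 'n list set \<Rightarrow> 'n list set" where
  "lquot n A = {u. n # u \<in> A}"

definition prefix_free :: "'n list set \<Rightarrow> bool" where
  "prefix_free P \<longleftrightarrow> (\<forall>u w. u \<in> P \<and> u @ w \<in> P \<longrightarrow> w = [])"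

definition Omega :: "'n list set set" where
  "Omega = {P. (\<forall>w\<in>P. w \<noteq> []) \<and> prefix_free P}"

definition omega :: "'n list set \<Rightarrow> 'n \<Rightarrow> 'n list set option" where
  "omega P n = (if [n] \<in> P then None else Some (lquot n P))"

definition detector :: "'x set \<Rightarrow> ('x \<Rightarrow> 'n \<Rightarrow> 'x option) \<Rightarrow> bool" where
  "detector A a \<longleftrightarrow> (\<forall>y\<in>A. \<forall>n. \<forall>y'. a y n = Some y' \<longrightarrow> y' \<in> A)"

definition Join :: "'n stream \<Rightarrow> ('x \<Rightarrow> 'n \<Rightarrow> 'x option)
    \<Rightarrow> ('n stream \<times> 'x) \<Rightarrow> ('n stream \<times> 'x) option" where
  "Join s a z = (case z of (t, y) \<Rightarrow>
      (case a y (t 0) of None \<Rightarrow> None | Some y' \<Rightarrow> Some (\<lambda>k. t (Suc k), y')))"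

fun iter :: "('z \<Rightarrow> 'z option) \<Rightarrow> nat \<Rightarrow> 'z \<Rightarrow> 'z option" where
  "iter g 0 z = Some z"
| "iter g (Suc 0) z = g z"
| "iter g (Suc (Suc k)) z = (case iter g (Suc k) z of None \<Rightarrow> None | Some z' \<Rightarrow> g z')"

definition Cdet :: "('x \<Rightarrow> 'n \<Rightarrow> 'x option) \<Rightarrow> 'x \<Rightarrow> ('n stream) set" where
  "Cdet a x = {s. \<forall>k\<ge>1. iter (Join s a) k (s, x) \<noteq> None}"

end

theory Submission
  imports Defs
begin

text \<open>Detectors are coalgebras of the functor \<open>(1 + X)\<^sup>N\<close> and \<open>omega\<close> is the final one: the unique
morphism into it sends a state to the set of words at whose last letter the detector first
fires \<open>\<Down>\<close>, and morphisms preserve the constraint \<open>Cdet\<close>. Hence the family of a detector is the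
family of its image, a subdetector of \<open>omega\<close>; conversely any subdetector of \<open>omega\<close> can be
copied into a carrier into which the prefix-free sets inject.\<close>

fun run :: "('x \<Rightarrow> 'n \<Rightarrow> 'x option) \<Rightarrow> 'x \<Rightarrow> 'n list \<Rightarrow> 'x option" where
  "run a y [] = Some y"
| "run a y (n # w) = (case a y n of None \<Rightarrow> None | Some y' \<Rightarrow> run a y' w)"

lemma run_append:
  "run a y (u @ w) = (case run a y u of None \<Rightarrow> None | Some z \<Rightarrow> run a z w)"
  by (induction u arbitrary: y) (auto split: option.splits)

lemma run_snoc: "run a y (w @ [n]) = (case run a y w of None \<Rightarrow> None | Some z \<Rightarrow> a z n)"
  by (simp add: run_append split: option.splits)

lemma iter_Suc: "iter g (Suc k) z = (case iter g k z of None \<Rightarrow> None | Some z' \<Rightarrow> g z')"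
  by (cases k) auto

lemma iter_Join:
  "iter (Join s a) k (s, x) = map_option (\<lambda>y. (\<lambda>i. s (i + k), y)) (run a x (map s [0..<k]))"
  by (induction k) (auto simp: iter_Suc run_snoc Join_def split: option.splits)

lemma Cdet_eq_run: "Cdet a x = {s. \<forall>k. run a x (map s [0..<k]) \<noteq> None}"
proof -
  have "(\<forall>k\<ge>1. P k) \<longleftrightarrow> (\<forall>k. P k)" if "P 0" for P :: "nat \<Rightarrow> bool"
    using that by (metis less_one not_less)
  then show ?thesis
    unfolding Cdet_def iter_Join by simp
qed

lemma safety_Cdet: "safety (Cdet a x)"
  unfolding safety_def Cdet_eq_run
proof (intro allI impI CollectI)
  fix s k
  assume "\<forall>m. \<exists>s'\<in>{s. \<forall>k. run a x (map s [0..<k]) \<noteq> None}. \<forall>i<m. s' i = s i"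
  then obtain s' where "\<forall>k. run a x (map s' [0..<k]) \<noteq> None" and "\<forall>i<k. s' i = s i"
    by blast
  moreover from this(2) have "map s' [0..<k] = map s [0..<k]" by simp
  ultimately show "run a x (map s [0..<k]) \<noteq> None" by metis
qed

lemma Cdet_cong:
  assumes "\<And>w. run a x w = None \<longleftrightarrow> run b y w = None"
  shows "Cdet a x = Cdet b y"
  using assms unfolding Cdet_eq_run by auto

lemma detector_omega_iff:
  "detector C omega \<longleftrightarrow> (\<forall>P\<in>C. \<forall>n. [n] \<in> P \<or> lquot n P \<in> C)"
  unfolding detector_def omega_def by auto

definition beh :: "('x \<Rightarrow> 'n \<Rightarrow> 'x option) \<Rightarrow> 'x \<Rightarrow> 'n list set" where
  "beh a y = {v @ [n] | v n z. run a y v = Some z \<and> a z n = None}"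

lemma singleton_in_beh_iff: "[n] \<in> beh a y \<longleftrightarrow> a y n = None"
  unfolding beh_def by auto

lemma lquot_beh: "a y n = Some y' \<Longrightarrow> lquot n (beh a y) = beh a y'"
  unfolding beh_def lquot_def by (force simp: Cons_eq_append_conv)

lemma beh_in_Omega: "beh a y \<in> Omega"
  unfolding Omega_def prefix_free_def
proof safe
  fix w assume "[] \<in> beh a y"
  then show False unfolding beh_def by auto
next
  fix u w
  assume u: "u \<in> beh a y" and uw: "u @ w \<in> beh a y"
  show "w = []"
  proof (rule ccontr)
    assume "w \<noteq> []"
    from u have stop: "run a y u = None"
      unfolding beh_def by (auto simp: run_snoc)
    from uw obtain v n z where "u @ w = v @ [n]" and "run a y v = Some z"
      unfolding beh_def by auto
    moreover from this(1) \<open>w \<noteq> []\<close> have "v = u @ butlast w"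
      by (metis butlast_append butlast_snoc)
    ultimately show False
      using stop by (simp add: run_append)
  qed
qed

lemma run_omega_beh: "run omega (beh a y) w = map_option (beh a) (run a y w)"
proof (induction w arbitrary: y)
  case (Cons n w)
  then show ?case
    by (cases "a y n") (simp_all add: omega_def singleton_in_beh_iff lquot_beh)
qed simp

lemma Cdet_omega_beh: "Cdet omega (beh a y) = Cdet a y"
  by (rule Cdet_cong) (simp add: run_omega_beh)

lemma detector_image_beh: "detector A a \<Longrightarrow> detector (beh a ` A) omega"
  unfolding detector_def omega_def
  by (auto simp: singleton_in_beh_iff lquot_beh split: option.splits)

definition omega_via :: "('n list set \<Rightarrow> 'x) \<Rightarrow> 'x \<Rightarrow> 'n \<Rightarrow> 'x option" where
  "omega_via f y n = map_option f (omega (inv f y) n)"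

lemma run_omega_via: "inj f \<Longrightarrow> run (omega_via f) (f P) w = map_option f (run omega P w)"
  by (induction w arbitrary: P) (auto simp: omega_via_def split: option.splits)

lemma Cdet_omega_via: "inj f \<Longrightarrow> Cdet (omega_via f) (f P) = Cdet omega P"
  by (rule Cdet_cong) (simp add: run_omega_via)

lemma detector_image_omega_via: "inj f \<Longrightarrow> detector C omega \<Longrightarrow> detector (f ` C) (omega_via f)"
  unfolding detector_def omega_via_def by auto

lemma family_eq_image_beh: "{Cdet a x | x. x \<in> A} = Cdet omega ` beh a ` A"
  by (simp add: setcompr_eq_image image_image Cdet_omega_beh)

lemma family_omega_via_eq_image:
  "inj f \<Longrightarrow> {Cdet (omega_via f) x | x. x \<in> f ` C} = Cdet omega ` C"
  by (simp add: setcompr_eq_image image_image Cdet_omega_via)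

theorem mainTheorem16:
  fixes F :: "('n::finite) stream set set"
    and dummy :: "'x itself"
  assumes big: "\<exists>f :: 'n list set \<Rightarrow> 'x. inj f"
    and safe: "\<forall>S\<in>F. safety S"
  shows "(\<exists>(A :: 'x set) a. detector A a \<and> F = {Cdet a x | x. x \<in> A})
     \<longleftrightarrow> (\<exists>C. C \<subseteq> Omega
            \<and> (\<forall>P\<in>C. \<forall>n. [n] \<in> P \<or> lquot n P \<in> C)
            \<and> (\<forall>S. safety S \<longrightarrow> (S \<in> F \<longleftrightarrow> (\<exists>P\<in>C. S = Cdet omega P))))"
    (is "?universal \<longleftrightarrow> (\<exists>C. ?closed_subset C)")
proof
  assume ?universal
  then obtain A :: "'x set" and a where "detector A a" and F: "F = {Cdet a x | x. x \<in> A}"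
    by blast
  have "beh a ` A \<subseteq> Omega"
    by (rule image_subsetI) (rule beh_in_Omega)
  moreover have "detector (beh a ` A) omega"
    using \<open>detector A a\<close> by (rule detector_image_beh)
  moreover have "F = Cdet omega ` beh a ` A"
    unfolding F by (rule family_eq_image_beh)
  ultimately have "?closed_subset (beh a ` A)"
    unfolding detector_omega_iff by auto
  then show "\<exists>C. ?closed_subset C" ..
next
  assume "\<exists>C. ?closed_subset C"
  then obtain C where "detector C omega"
    and C: "\<forall>S. safety S \<longrightarrow> (S \<in> F \<longleftrightarrow> (\<exists>P\<in>C. S = Cdet omega P))"
    unfolding detector_omega_iff by blast
  from big obtain f :: "'n list set \<Rightarrow> 'x" where "inj f" ..
  have "F = Cdet omega ` C"
    using C safe safety_Cdet[of omega] by (auto simp: image_iff)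
  then have "F = {Cdet (omega_via f) x | x. x \<in> f ` C}"
    using family_omega_via_eq_image[OF \<open>inj f\<close>] by simp
  with detector_image_omega_via[OF \<open>inj f\<close> \<open>detector C omega\<close>] show ?universal
    by blast
qed

end
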